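(* Let $X_1,\ldots,X_{N_1+N_2}\in\mathbb{R}^D$ with $N_1,N_2\ge1$, viewed as two segments $\{X_n:n=1,\ldots,N_1\}$ and $\{X_n:n=N_1+1,\ldots,N_1+N_2\}$. For $0<t<N_1$, consider shifting the change point from $N_1$ to $N_1-t$, so that the segments become $\{X_n:n=1,\ldots,N_1-t\}$ and $\{X_n:n=N_1-t+1,\ldots,N_1+N_2\}$. Then the within-segment quadratic loss (sum of the quadratic losses of the two segments) is reduced by this operation if and only if $$\frac{N_1\,|\bar X_{0,N_1}-\bar X_{N_1-t,N_1}|^2}{N_1-t}>\frac{N_2\,|\bar X_{N_1,N_1+N_2}-\bar X_{N_1-t,N_1}|^2}{N_2+t},$$ where $\bar X_{n_1,n_2}$ denotes the sample mean of $\{X_n:n=n_1+1,\ldots,n_2\}$.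
   Context: Quadratic loss of a segment $x_a,\ldots,x_b\in\mathbb{R}^D$: $\sum_{n=a}^b|x_n-\bar x|^2$, where $\bar x$ is the sample mean of the segment and $|\cdot|$ is the Euclidean norm. *)

theory Defs
  imports "HOL-Analysis.Analysis"
begin

definition seg_mean :: "(nat \<Rightarrow> 'a::real_vector) \<Rightarrow> nat \<Rightarrow> nat \<Rightarrow> 'a" where
  "seg_mean X n1 n2 = (1 / real (n2 - n1)) *\<^sub>R (\<Sum>n\<in>{n1<..n2}. X n)"

definition seg_loss :: "(nat \<Rightarrow> 'a::real_inner) \<Rightarrow> nat \<Rightarrow> nat \<Rightarrow> real" where
  "seg_loss X n1 n2 = (\<Sum>n\<in>{n1<..n2}. (norm (X n - seg_mean X n1 n2))\<^sup>2)"

end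

theory Submission
  imports Defs
begin

text \<open>
  Huygens' decomposition \<open>\<Sum>\<^sub>S |X\<^sub>n - y|\<^sup>2 = loss(S) + |S| |mean(S) - y|\<^sup>2\<close>, applied to the
  mean of the union of two adjacent segments, shows that merging segments of sizes \<open>p\<close>
  and \<open>q\<close> costs exactly \<open>pq/(p+q)\<close> times the squared distance of their means. Moving the
  change point from \<open>N\<^sub>1\<close> to \<open>N\<^sub>1 - t\<close> splits the first segment and merges the piece of
  length \<open>t\<close> into the second, so both losses are the common sum of the three block losses
  plus one such merging cost. Comparing the two costs gives the inequality, after writing
  \<open>mean(0,N\<^sub>1) - mean(N\<^sub>1-t,N\<^sub>1)\<close> as \<open>(N\<^sub>1-t)/N\<^sub>1\<close> times \<open>mean(0,N\<^sub>1-t) - mean(N\<^sub>1-t,N\<^sub>1)\<close>.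
\<close>

definition set_mean :: "('i \<Rightarrow> 'a::real_vector) \<Rightarrow> 'i set \<Rightarrow> 'a" where
  "set_mean X S = (1 / real (card S)) *\<^sub>R sum X S"

definition set_loss :: "('i \<Rightarrow> 'a::real_inner) \<Rightarrow> 'i set \<Rightarrow> real" where
  "set_loss X S = (\<Sum>n\<in>S. (norm (X n - set_mean X S))\<^sup>2)"

lemma seg_mean_eq_set_mean: "seg_mean X a b = set_mean X {a<..b}"
  by (simp add: seg_mean_def set_mean_def)

lemma seg_loss_eq_set_loss: "seg_loss X a b = set_loss X {a<..b}"
  by (simp add: seg_loss_def set_loss_def seg_mean_eq_set_mean)

text \<open>No hypotheses are needed: if \<open>card S = 0\<close> then \<open>S\<close> is empty or infinite and both sides are \<open>0\<close>.\<close>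
lemma card_scaleR_set_mean: "real (card S) *\<^sub>R set_mean X S = sum X S"
  by (cases "card S = 0") (auto simp: set_mean_def card_eq_0_iff)

lemma card_scaleR_set_mean_Un:
  assumes "finite S" "finite T" "S \<inter> T = {}"
  shows "real (card (S \<union> T)) *\<^sub>R set_mean X (S \<union> T)
           = real (card S) *\<^sub>R set_mean X S + real (card T) *\<^sub>R set_mean X T"
  using assms by (simp add: card_scaleR_set_mean sum.union_disjoint)

lemma sum_norm_diff_sq_eq_set_loss:
  fixes X :: "'i \<Rightarrow> 'a::real_inner"
  shows "(\<Sum>n\<in>S. (norm (X n - y))\<^sup>2) = set_loss X S + real (card S) * (norm (set_mean X S - y))\<^sup>2"
proof -
  let ?m = "set_mean X S"
  have expand: "(norm (X n - y))\<^sup>2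
      = (norm (X n - ?m))\<^sup>2 + 2 * inner (X n - ?m) (?m - y) + (norm (?m - y))\<^sup>2" for n
    using dot_norm[of "X n - ?m" "?m - y"] by simp
  have "(\<Sum>n\<in>S. inner (X n - ?m) (?m - y)) = inner (\<Sum>n\<in>S. X n - ?m) (?m - y)"
    by (simp add: inner_sum_left)
  also have "(\<Sum>n\<in>S. X n - ?m) = sum X S - real (card S) *\<^sub>R ?m"
    by (simp add: sum_subtractf sum_constant_scaleR)
  finally have cross: "(\<Sum>n\<in>S. inner (X n - ?m) (?m - y)) = 0"
    by (simp add: card_scaleR_set_mean)
  show ?thesis
    by (simp add: expand sum.distrib sum_distrib_left[symmetric] cross set_loss_def)
qed

lemma barycentre_minus:
  fixes a b w :: "'a::real_vector"
  assumes "(p + q) *\<^sub>R w = p *\<^sub>R a + q *\<^sub>R b" "p + q \<noteq> 0"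
  shows "w - b = (p / (p + q)) *\<^sub>R (a - b)"
proof -
  have "(p + q) *\<^sub>R (w - b) = p *\<^sub>R (a - b)"
    using assms(1) by (simp add: algebra_simps)
  then have "(1 / (p + q)) *\<^sub>R ((p + q) *\<^sub>R (w - b)) = (1 / (p + q)) *\<^sub>R (p *\<^sub>R (a - b))"
    by simp
  then show ?thesis
    using assms(2) by simp
qed

lemma weighted_sq_dist_barycentre:
  fixes a b w :: "'a::real_normed_vector"
  assumes "(p + q) *\<^sub>R w = p *\<^sub>R a + q *\<^sub>R b" "p + q \<noteq> 0"
  shows "p * (norm (a - w))\<^sup>2 + q * (norm (b - w))\<^sup>2 = p * q / (p + q) * (norm (a - b))\<^sup>2"
proof -
  have "w - b = (p / (p + q)) *\<^sub>R (a - b)"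
    using barycentre_minus[OF assms] .
  then have dist_b: "norm (b - w) = \<bar>p / (p + q)\<bar> * norm (a - b)"
    by (metis norm_minus_commute norm_scaleR)
  have "w - a = (q / (p + q)) *\<^sub>R (b - a)"
    using barycentre_minus[of q p w b a] assms by (simp add: add.commute)
  then have dist_a: "norm (a - w) = \<bar>q / (p + q)\<bar> * norm (a - b)"
    by (metis norm_minus_commute norm_scaleR)
  have "p * (norm (a - w))\<^sup>2 + q * (norm (b - w))\<^sup>2
      = (p * (q / (p + q))\<^sup>2 + q * (p / (p + q))\<^sup>2) * (norm (a - b))\<^sup>2"
    unfolding dist_a dist_b power_mult_distrib power2_abs by (simp add: algebra_simps)
  also have "p * (q / (p + q))\<^sup>2 + q * (p / (p + q))\<^sup>2 = p * q / (p + q)"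
    using assms(2) by (simp add: divide_simps power2_eq_square) (simp add: algebra_simps)
  finally show ?thesis .
qed

lemma set_loss_Un:
  fixes X :: "'i \<Rightarrow> 'a::real_inner"
  assumes "finite S" "finite T" "S \<inter> T = {}" "S \<union> T \<noteq> {}"
  shows "set_loss X (S \<union> T) = set_loss X S + set_loss X T
           + real (card S) * real (card T) / (real (card S) + real (card T))
             * (norm (set_mean X S - set_mean X T))\<^sup>2"
proof -
  let ?w = "set_mean X (S \<union> T)" and ?p = "real (card S)" and ?q = "real (card T)"
  have card_Un: "real (card (S \<union> T)) = ?p + ?q"
    using assms by (simp add: card_Un_disjoint)
  have "card (S \<union> T) \<noteq> 0"
    using assms by simp
  then have "?p + ?q \<noteq> 0"
    using card_Un by linarith
  then have cost: "?p * (norm (set_mean X S - ?w))\<^sup>2 + ?q * (norm (set_mean X T - ?w))\<^sup>2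
      = ?p * ?q / (?p + ?q) * (norm (set_mean X S - set_mean X T))\<^sup>2"
    using card_scaleR_set_mean_Un[OF assms(1-3), of X] card_Un
    by (intro weighted_sq_dist_barycentre) simp_all
  have "set_loss X (S \<union> T) = (\<Sum>n\<in>S. (norm (X n - ?w))\<^sup>2) + (\<Sum>n\<in>T. (norm (X n - ?w))\<^sup>2)"
    using assms by (simp add: set_loss_def sum.union_disjoint)
  also have "\<dots> = set_loss X S + set_loss X T
      + (?p * (norm (set_mean X S - ?w))\<^sup>2 + ?q * (norm (set_mean X T - ?w))\<^sup>2)"
    by (simp add: sum_norm_diff_sq_eq_set_loss)
  finally show ?thesis
    by (simp add: cost)
qed

lemma seg_loss_split:
  fixes X :: "nat \<Rightarrow> 'a::real_inner"
  assumes "a \<le> b" "b \<le> c" "a < c"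
  shows "seg_loss X a c = seg_loss X a b + seg_loss X b c
           + real (b - a) * real (c - b) / real (c - a) * (norm (seg_mean X a b - seg_mean X b c))\<^sup>2"
proof -
  have "{a<..c} = {a<..b} \<union> {b<..c}"
    using assms by auto
  moreover have "real (b - a) + real (c - b) = real (c - a)"
    using assms by simp
  ultimately show ?thesis
    using set_loss_Un[of "{a<..b}" "{b<..c}" X] assms
    by (simp add: seg_loss_eq_set_loss seg_mean_eq_set_mean)
qed

lemma seg_mean_split_minus:
  fixes X :: "nat \<Rightarrow> 'a::real_vector"
  assumes "a \<le> b" "b \<le> c" "a < c"
  shows "seg_mean X a c - seg_mean X b c
           = (real (b - a) / real (c - a)) *\<^sub>R (seg_mean X a b - seg_mean X b c)"
proof -
  have lengths: "real (b - a) + real (c - b) = real (c - a)"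
    using assms by simp
  have "{a<..b} \<union> {b<..c} = {a<..c}"
    using assms by auto
  then have "(real (b - a) + real (c - b)) *\<^sub>R seg_mean X a c
      = real (b - a) *\<^sub>R seg_mean X a b + real (c - b) *\<^sub>R seg_mean X b c"
    using card_scaleR_set_mean_Un[of "{a<..b}" "{b<..c}" X] lengths
    by (simp add: seg_mean_eq_set_mean)
  from barycentre_minus[OF this] show ?thesis
    using assms lengths by simp
qed

theorem proposition1:
  fixes X :: "nat \<Rightarrow> 'a::euclidean_space" and N1 N2 t :: nat
  assumes "N1 \<ge> 1" and "N2 \<ge> 1" and "0 < t" and "t < N1"
  shows "seg_loss X 0 (N1 - t) + seg_loss X (N1 - t) (N1 + N2)
           < seg_loss X 0 N1 + seg_loss X N1 (N1 + N2)
         \<longleftrightarrow>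
         real N1 * (norm (seg_mean X 0 N1 - seg_mean X (N1 - t) N1))\<^sup>2 / real (N1 - t)
           > real N2 * (norm (seg_mean X N1 (N1 + N2) - seg_mean X (N1 - t) N1))\<^sup>2 / real (N2 + t)"
proof -
  define a b c where "a = seg_mean X 0 (N1 - t)" and "b = seg_mean X (N1 - t) N1"
    and "c = seg_mean X N1 (N1 + N2)"
  have old: "seg_loss X 0 N1 = seg_loss X 0 (N1 - t) + seg_loss X (N1 - t) N1
      + real (N1 - t) * real t / real N1 * (norm (a - b))\<^sup>2"
    using seg_loss_split[of 0 "N1 - t" N1 X] assms by (simp add: a_def b_def)
  have new: "seg_loss X (N1 - t) (N1 + N2) = seg_loss X (N1 - t) N1 + seg_loss X N1 (N1 + N2)
      + real t * real N2 / real (N2 + t) * (norm (b - c))\<^sup>2"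
    using seg_loss_split[of "N1 - t" N1 "N1 + N2" X] assms by (simp add: b_def c_def)
  have mean_shift: "seg_mean X 0 N1 - b = (real (N1 - t) / real N1) *\<^sub>R (a - b)"
    using seg_mean_split_minus[of 0 "N1 - t" N1 X] assms by (simp add: a_def b_def)
  have "real N1 * (norm (seg_mean X 0 N1 - b))\<^sup>2 / real (N1 - t) = real (N1 - t) / real N1 * (norm (a - b))\<^sup>2"
    using assms by (simp add: mean_shift power_mult_distrib power2_eq_square)
  moreover have "real t * real N2 / real (N2 + t) * (norm (b - c))\<^sup>2
        < real (N1 - t) * real t / real N1 * (norm (a - b))\<^sup>2
      \<longleftrightarrow> real N2 * (norm (c - b))\<^sup>2 / real (N2 + t) < real (N1 - t) / real N1 * (norm (a - b))\<^sup>2"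
  proof -
    have new_cost: "real t * real N2 / real (N2 + t) * (norm (b - c))\<^sup>2
        = real t * (real N2 * (norm (c - b))\<^sup>2 / real (N2 + t))"
      by (simp add: norm_minus_commute)
    have old_cost: "real (N1 - t) * real t / real N1 * (norm (a - b))\<^sup>2
        = real t * (real (N1 - t) / real N1 * (norm (a - b))\<^sup>2)"
      by simp
    show ?thesis
      unfolding new_cost old_cost by (rule mult_less_cancel_left_pos) (use assms in simp)
  qed
  ultimately show ?thesis
    by (simp add: old new b_def[symmetric] c_def[symmetric])
qed

end
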